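(* Let $T$ be a finite rooted tree, and let $\mathcal{H}(T)$ be the hypergraph on $V(T)$ whose hyperedges are, for each leaf $\ell$, the set of ancestors of $\ell$ (including $\ell$ itself). Then $\mathcal{H}(T)$ can be realized with the family $\mathcal{R}_{\rm SW}$ of all south-west quadrants: there is an injective map $\pi\colon V(T) \to \mathbb{R}^2$ such that for every leaf $\ell$ there is a south-west quadrant $Q$ with $\pi(V(T)) \cap Q$ equal to the image of the set of ancestors of $\ell$ (including $\ell$). Moreover, this can be done so that the root is the bottommost and leftmost point, and the children of each non-leaf vertex lie on a common line of slope $-1$.
   Context: South-west quadrants: $\mathcal{R}_{\rm SW} = \{\{(x,y) \in \mathbb{R}^2 : x \leq a,\ y \leq b\} : a,b \in \mathbb{R}\}$. *)

theory Defs
  imports Complex_Main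
begin

text \<open>A finite rooted tree is given by a finite vertex set V, a root r in V and a
parent function par, such that every non-root vertex has its parent in V and
iterating par from any vertex reaches the root (so there are no cycles).\<close>

definition rooted_tree :: "'a set \<Rightarrow> 'a \<Rightarrow> ('a \<Rightarrow> 'a) \<Rightarrow> bool" where
  "rooted_tree V r par \<longleftrightarrow> finite V \<and> r \<in> V \<and>
     (\<forall>v \<in> V - {r}. par v \<in> V) \<and>
     (\<forall>v \<in> V. \<exists>n. (par ^^ n) v = r)"

definition children :: "'a set \<Rightarrow> 'a \<Rightarrow> ('a \<Rightarrow> 'a) \<Rightarrow> 'a \<Rightarrow> 'a set" where
  "children V r par v = {w \<in> V - {r}. par w = v}"

definition is_leaf :: "'a set \<Rightarrow> 'a \<Rightarrow> ('a \<Rightarrow> 'a) \<Rightarrow> 'a \<Rightarrow> bool" where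
  "is_leaf V r par v \<longleftrightarrow> v \<in> V \<and> children V r par v = {}"

text \<open>Ancestors of v, including v itself and the root: the vertices on the
parent chain from v up to (and including) the root.\<close>
definition ancestors :: "'a \<Rightarrow> ('a \<Rightarrow> 'a) \<Rightarrow> 'a \<Rightarrow> 'a set" where
  "ancestors r par v = {(par ^^ k) v | k. \<forall>j<k. (par ^^ j) v \<noteq> r}"

definition sw_quadrant :: "real \<Rightarrow> real \<Rightarrow> (real \<times> real) set" where
  "sw_quadrant a b = {p. fst p \<le> a \<and> snd p \<le> b}"

end

(*
  Label the vertices injectively by 1, ..., B - 1 and read the labels along the path from the
  root down to v as the leading digits of a K-digit base-B numeral x(v); y(v) is obtained in
  the same way from the complementary labels B - f.  The digit string of an ancestor of v is
  an initial segment of that of v, so both of its coordinates are at most those of v.  For a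
  non-ancestor w, either the path to w continues the path to v with a nonzero digit, and both
  coordinates grow, or the two paths part at some depth: there the larger of the two labels
  makes x(w) > x(v) or y(w) > y(v).  Hence the south-west quadrant at (x(v), y(v)) sees
  exactly the ancestors of v.  As f + (B - f) = B digitwise, x + y only depends on the depth,
  which puts siblings on a common line of slope -1.
*)
theory Submission
  imports Defs "HOL-Library.Sublist"
begin

lemma horner_sum_less_power:
  fixes f :: "'a \<Rightarrow> nat"
  assumes "\<forall>x\<in>set xs. f x < B"
  shows "horner_sum f B xs < B ^ length xs"
  using assms
proof (induction xs)
  case Nil
  then show ?case by simp
next
  case (Cons x xs)
  then have "f x + B * horner_sum f B xs < B * (horner_sum f B xs + 1)"
    by simp
  also have "\<dots> \<le> B * B ^ length xs"
    using Cons by (intro mult_le_mono2) simp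
  finally show ?case by simp
qed

lemma horner_sum_add_const:
  fixes f g :: "'b \<Rightarrow> 'a::comm_semiring_1"
  assumes "\<forall>x\<in>set xs. f x + g x = c"
  shows "horner_sum f a xs + horner_sum g a xs = horner_sum (\<lambda>_. c) a xs"
  using assms
proof (induction xs)
  case (Cons x xs)
  have "horner_sum f a (x # xs) + horner_sum g a (x # xs) =
        (f x + g x) + a * (horner_sum f a xs + horner_sum g a xs)"
    by (simp add: algebra_simps)
  with Cons show ?case by simp
qed simp

text \<open>The digits \<open>map f xs\<close>, least significant first, placed as the
leading digits of a \<open>K\<close>-digit numeral in base \<open>B\<close>.\<close>

definition aligned_horner_sum :: "('a \<Rightarrow> nat) \<Rightarrow> nat \<Rightarrow> nat \<Rightarrow> 'a list \<Rightarrow> nat" where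
  "aligned_horner_sum f B K xs = B ^ (K - length xs) * horner_sum f B xs"

lemma aligned_horner_sum_suffix_le:
  assumes "suffix xs ys" and "length ys \<le> K"
  shows "aligned_horner_sum f B K xs \<le> aligned_horner_sum f B K ys"
proof -
  obtain zs where ys: "ys = zs @ xs"
    using assms(1) by (auto simp: suffix_def)
  have "aligned_horner_sum f B K xs = B ^ (K - length ys) * (B ^ length zs * horner_sum f B xs)"
    using assms(2) by (simp add: aligned_horner_sum_def ys flip: power_add mult.assoc)
  also have "\<dots> \<le> aligned_horner_sum f B K ys"
    by (simp add: aligned_horner_sum_def ys horner_sum_append)
  finally show ?thesis .
qed

lemma aligned_horner_sum_less:
  assumes xs: "xs = bs @ b # zs" and ys: "ys = cs @ c # zs" and "f b < f c"
    and digits: "\<forall>x\<in>set xs. f x < B" and "length xs \<le> K" and "length ys \<le> K"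
  shows "aligned_horner_sum f B K xs < aligned_horner_sum f B K ys"
proof -
  define n where "n = K - Suc (length zs)"
  let ?h = "horner_sum f B" and ?m = "K - length xs"
  have "0 < B"
    using digits xs by auto
  have "?m + length bs = n"
    using assms(5) by (simp add: xs n_def)
  have low: "B ^ ?m * ?h bs < B ^ ?m * B ^ length bs"
    using horner_sum_less_power[of bs f B] digits \<open>0 < B\<close> by (simp add: xs)
  have "aligned_horner_sum f B K xs = B ^ ?m * ?h bs + B ^ n * (f b + B * ?h zs)"
    using \<open>?m + length bs = n\<close>
    by (simp add: aligned_horner_sum_def xs horner_sum_append algebra_simps flip: power_add)
  also have "\<dots> < B ^ n * (Suc (f b) + B * ?h zs)"
    using \<open>?m + length bs = n\<close> low by (simp add: algebra_simps flip: power_add)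
  also have "\<dots> \<le> B ^ n * (f c + B * ?h zs)"
    using assms(3) by (intro mult_le_mono2) simp
  also have "\<dots> \<le> aligned_horner_sum f B K ys"
    using assms(6) by (simp add: aligned_horner_sum_def ys n_def horner_sum_append
        algebra_simps flip: power_add)
  finally show ?thesis .
qed

lemma aligned_horner_sum_extend_less:
  assumes ys: "ys = cs @ c # xs" and "0 < f c" and "0 < B" and "length ys \<le> K"
  shows "aligned_horner_sum f B K xs < aligned_horner_sum f B K ys"
proof -
  define n where "n = K - Suc (length xs)"
  let ?h = "horner_sum f B"
  have "K - length xs = Suc n"
    using assms(4) by (simp add: ys n_def)
  then have "aligned_horner_sum f B K xs = B ^ n * (B * ?h xs)"
    by (simp add: aligned_horner_sum_def)
  also have "\<dots> < B ^ n * (f c + B * ?h xs)"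
    using assms(2,3) by simp
  also have "\<dots> \<le> aligned_horner_sum f B K ys"
    using assms(4) by (simp add: aligned_horner_sum_def ys n_def horner_sum_append
        algebra_simps flip: power_add)
  finally show ?thesis .
qed

lemma aligned_horner_sum_const:
  "length xs = length ys \<Longrightarrow> aligned_horner_sum (\<lambda>_. c) B K xs = aligned_horner_sum (\<lambda>_. c) B K ys"
  by (simp add: aligned_horner_sum_def horner_sum_eq_sum)

lemma not_suffix_decomp:
  assumes "\<not> suffix xs ys" and "\<not> suffix ys xs"
  obtains as b bs c cs where "b \<noteq> c" and "xs = bs @ b # as" and "ys = cs @ c # as"
proof -
  have "rev xs \<parallel> rev ys"
    using assms by (simp add: parallel_def suffix_to_prefix)
  then obtain as b bs c cs where "b \<noteq> c" "rev xs = as @ b # bs" "rev ys = as @ c # cs"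
    using parallel_decomp by blast
  then have "xs = rev bs @ b # rev as" and "ys = rev cs @ c # rev as"
    by (simp_all add: rev_swap)
  with \<open>b \<noteq> c\<close> show thesis by (rule that)
qed

locale finite_rooted_tree =
  fixes V :: "'a set" and r :: 'a and par :: "'a \<Rightarrow> 'a"
  assumes rooted_tree: "rooted_tree V r par"
begin

lemma finite_V: "finite V"
  and root_in_V: "r \<in> V"
  and par_in_V: "v \<in> V \<Longrightarrow> v \<noteq> r \<Longrightarrow> par v \<in> V"
  and reaches_root: "v \<in> V \<Longrightarrow> \<exists>n. (par ^^ n) v = r"
  using rooted_tree by (auto simp: rooted_tree_def)

definition depth :: "'a \<Rightarrow> nat" where
  "depth v = (LEAST n. (par ^^ n) v = r)"

lemma funpow_depth_eq_root: "v \<in> V \<Longrightarrow> (par ^^ depth v) v = r"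
  unfolding depth_def using reaches_root by (rule LeastI_ex)

lemma funpow_neq_root: "k < depth v \<Longrightarrow> (par ^^ k) v \<noteq> r"
  unfolding depth_def by (rule not_less_Least)

lemma depth_eq_0_iff: "v \<in> V \<Longrightarrow> depth v = 0 \<longleftrightarrow> v = r"
  using funpow_depth_eq_root[of v] funpow_neq_root[of 0 v] by auto

lemma funpow_in_V: "v \<in> V \<Longrightarrow> k \<le> depth v \<Longrightarrow> (par ^^ k) v \<in> V"
proof (induction k)
  case (Suc k)
  then show ?case
    using par_in_V funpow_neq_root[of k v] by simp
qed simp

lemma depth_funpow:
  assumes "v \<in> V" and "k \<le> depth v"
  shows "depth ((par ^^ k) v) = depth v - k"
  unfolding depth_def[of "(par ^^ k) v"]
proof (rule Least_equality)
  show "(par ^^ (depth v - k)) ((par ^^ k) v) = r"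
    using assms funpow_depth_eq_root[of v] funpow_add[of "depth v - k" k par] by simp
  show "depth v - k \<le> n" if "(par ^^ n) ((par ^^ k) v) = r" for n
    using that funpow_neq_root[of "n + k" v] by (fastforce simp: funpow_add)
qed

lemma depth_child: "w \<in> children V r par v \<Longrightarrow> depth w = Suc (depth v)"
  using depth_funpow[of w 1] depth_eq_0_iff[of w] by (auto simp: children_def)

definition path_to_root :: "'a \<Rightarrow> 'a list" where
  "path_to_root v = map (\<lambda>k. (par ^^ k) v) [0..<depth v]"

lemma length_path_to_root [simp]: "length (path_to_root v) = depth v"
  by (simp add: path_to_root_def)

lemma set_path_to_root: "v \<in> V \<Longrightarrow> set (path_to_root v) \<subseteq> V"
  by (auto simp: path_to_root_def intro: funpow_in_V)

lemma path_to_root_funpow: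
  assumes "v \<in> V" and "k \<le> depth v"
  shows "path_to_root ((par ^^ k) v) = drop k (path_to_root v)"
proof -
  have "(par ^^ i) ((par ^^ k) v) = (par ^^ (i + k)) v" for i
    by (simp add: funpow_add)
  moreover have "[k..<depth v] = map (\<lambda>i. i + k) [0..<depth v - k]"
    using assms(2) by (simp add: map_add_upt)
  ultimately show ?thesis
    using assms by (simp add: path_to_root_def depth_funpow drop_map)
qed

lemma path_to_root_nth_0: "0 < depth v \<Longrightarrow> path_to_root v ! 0 = v"
  by (simp add: path_to_root_def)

lemma inj_on_path_to_root: "inj_on path_to_root V"
proof (rule inj_onI)
  fix v w assume v: "v \<in> V" and w: "w \<in> V" and eq: "path_to_root v = path_to_root w"
  have same_depth: "depth v = depth w"
    by (metis eq length_path_to_root)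
  show "v = w"
  proof (cases "depth v = 0")
    case True
    then show ?thesis
      using same_depth depth_eq_0_iff[OF v] depth_eq_0_iff[OF w] by simp
  next
    case False
    then have "v = path_to_root v ! 0"
      by (simp add: path_to_root_nth_0)
    also have "\<dots> = w"
      using False same_depth by (simp add: eq path_to_root_nth_0)
    finally show ?thesis .
  qed
qed

lemma ancestors_eq:
  assumes "v \<in> V"
  shows "ancestors r par v = (\<lambda>k. (par ^^ k) v) ` {..depth v}"
proof -
  have "(\<forall>j<k. (par ^^ j) v \<noteq> r) \<longleftrightarrow> k \<le> depth v" for k
  proof
    show "k \<le> depth v" if "\<forall>j<k. (par ^^ j) v \<noteq> r"
      using that funpow_depth_eq_root[OF assms] not_le by blast
    show "\<forall>j<k. (par ^^ j) v \<noteq> r" if "k \<le> depth v"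
      using that funpow_neq_root by auto
  qed
  then show ?thesis
    by (auto simp: ancestors_def)
qed

lemma ancestor_iff_suffix:
  assumes "l \<in> V"
  shows "w \<in> ancestors r par l \<longleftrightarrow> w \<in> V \<and> suffix (path_to_root w) (path_to_root l)"
proof
  assume "w \<in> ancestors r par l"
  then obtain k where "k \<le> depth l" and "w = (par ^^ k) l"
    using ancestors_eq[OF assms] by auto
  then show "w \<in> V \<and> suffix (path_to_root w) (path_to_root l)"
    using assms funpow_in_V path_to_root_funpow suffix_drop by simp
next
  assume "w \<in> V \<and> suffix (path_to_root w) (path_to_root l)"
  then obtain zs where "w \<in> V" and l: "path_to_root l = zs @ path_to_root w"
    by (auto simp: suffix_def)
  define k where "k = length zs"
  have "k \<le> depth l"
    using l by (simp add: k_def flip: length_path_to_root)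
  then have "path_to_root w = path_to_root ((par ^^ k) l)"
    using assms l by (simp add: path_to_root_funpow k_def)
  then have "w = (par ^^ k) l"
    using inj_on_path_to_root \<open>w \<in> V\<close> funpow_in_V[OF assms \<open>k \<le> depth l\<close>]
    by (auto dest: inj_onD)
  then show "w \<in> ancestors r par l"
    using ancestors_eq[OF assms] \<open>k \<le> depth l\<close> by auto
qed

lemma root_in_ancestors: "v \<in> V \<Longrightarrow> r \<in> ancestors r par v"
  using ancestors_eq[of v] funpow_depth_eq_root[of v] by (auto intro: image_eqI[where x = "depth v"])

definition path_code :: "('a \<Rightarrow> nat) \<Rightarrow> nat \<Rightarrow> nat \<Rightarrow> 'a \<Rightarrow> nat" where
  "path_code f B K v = aligned_horner_sum f B K (path_to_root v)"

context
  fixes B K :: nat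
  assumes depth_le: "\<And>v. v \<in> V \<Longrightarrow> depth v \<le> K"
begin

lemma path_code_ancestor_le:
  assumes "l \<in> V" and "w \<in> ancestors r par l"
  shows "path_code f B K w \<le> path_code f B K l"
  using assms ancestor_iff_suffix depth_le
  by (simp add: path_code_def aligned_horner_sum_suffix_le)

lemma path_code_ancestor_less:
  assumes "\<forall>v\<in>V. 0 < f v" and "0 < B"
    and "l \<in> V" and "w \<in> ancestors r par l" and "w \<noteq> l"
  shows "path_code f B K w < path_code f B K l"
proof -
  have "w \<in> V" and "suffix (path_to_root w) (path_to_root l)"
    using assms(3,4) ancestor_iff_suffix by auto
  then obtain ds where l: "path_to_root l = ds @ path_to_root w"
    by (auto simp: suffix_def)
  moreover have "ds \<noteq> []"
    using l inj_on_path_to_root \<open>w \<in> V\<close> assms(3,5) by (auto dest: inj_onD)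
  then obtain zs c where "ds = zs @ [c]"
    by (metis rev_exhaust)
  ultimately have l: "path_to_root l = zs @ c # path_to_root w"
    by simp
  have "c \<in> V"
    using set_path_to_root[OF assms(3)] by (auto simp: l)
  then show ?thesis
    using aligned_horner_sum_extend_less[OF l] assms(1,2,3) depth_le
    by (simp add: path_code_def)
qed

lemma path_code_less_divergent:
  assumes "\<forall>v\<in>V. f v < B" and "l \<in> V" and "w \<in> V"
    and "path_to_root l = bs @ b # zs" and "path_to_root w = cs @ c # zs" and "f b < f c"
  shows "path_code f B K l < path_code f B K w"
  unfolding path_code_def
proof (rule aligned_horner_sum_less[OF assms(4,5,6)])
  show "\<forall>x\<in>set (path_to_root l). f x < B"
    using assms(1) set_path_to_root[OF assms(2)] by auto
qed (use assms(2,3) depth_le in auto)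

lemma not_ancestor_path_code_less:
  assumes "inj_on f V" and "\<forall>v\<in>V. 0 < f v \<and> f v < B"
    and "l \<in> V" and "w \<in> V" and "w \<notin> ancestors r par l"
  shows "path_code f B K l < path_code f B K w \<or>
         path_code (\<lambda>v. B - f v) B K l < path_code (\<lambda>v. B - f v) B K w"
proof -
  have not_suffix: "\<not> suffix (path_to_root w) (path_to_root l)"
    using assms(3-5) ancestor_iff_suffix by blast
  show ?thesis
  proof (cases "suffix (path_to_root l) (path_to_root w)")
    case True
    then have "l \<in> ancestors r par w" and "l \<noteq> w"
      using assms(3-5) ancestor_iff_suffix not_suffix by auto
    then show ?thesis
      using path_code_ancestor_less assms(2,4) by auto
  next
    case False
    then obtain zs b bs c cs where "b \<noteq> c"
      and l: "path_to_root l = bs @ b # zs" and w: "path_to_root w = cs @ c # zs"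
      by (rule not_suffix_decomp[OF _ not_suffix])
    have "b \<in> V" "c \<in> V"
      using set_path_to_root[OF assms(3)] set_path_to_root[OF assms(4)] l w by auto
    then have "f b \<noteq> f c" and "f b < B" and "f c < B"
      using \<open>b \<noteq> c\<close> assms(1,2) by (auto dest: inj_onD)
    show ?thesis
    proof (cases "f b < f c")
      case True
      then show ?thesis
        using path_code_less_divergent[OF _ assms(3,4) l w] assms(2) by simp
    next
      case False
      then have "B - f b < B - f c"
        using \<open>f b \<noteq> f c\<close> \<open>f c < B\<close> by linarith
      then show ?thesis
        using path_code_less_divergent[OF _ assms(3,4) l w, of "\<lambda>v. B - f v"] assms(2) by simp
    qed
  qed
qed

lemma path_code_add_complement:
  assumes "\<forall>v\<in>V. f v \<le> B" and "v \<in> V"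
  shows "path_code f B K v + path_code (\<lambda>u. B - f u) B K v =
         aligned_horner_sum (\<lambda>_. B) B K (path_to_root v)"
proof -
  have "\<forall>u\<in>set (path_to_root v). f u + (B - f u) = B"
    using assms(1) set_path_to_root[OF assms(2)] by auto
  then show ?thesis
    by (simp add: path_code_def aligned_horner_sum_def horner_sum_add_const flip: add_mult_distrib2)
qed

end

context
  fixes f :: "'a \<Rightarrow> nat" and B K :: nat
  assumes inj_f: "inj_on f V"
    and f_range: "\<forall>v\<in>V. 0 < f v \<and> f v < B"
    and depth_le: "\<And>v. v \<in> V \<Longrightarrow> depth v \<le> K"
begin

definition sw_point :: "'a \<Rightarrow> real \<times> real" where
  "sw_point v = (real (path_code f B K v), real (path_code (\<lambda>u. B - f u) B K v))"

lemma sw_point_in_quadrant_iff: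
  assumes "l \<in> V" and "w \<in> V"
  shows "sw_point w \<in> sw_quadrant (fst (sw_point l)) (snd (sw_point l)) \<longleftrightarrow>
         w \<in> ancestors r par l"
proof
  assume le: "sw_point w \<in> sw_quadrant (fst (sw_point l)) (snd (sw_point l))"
  show "w \<in> ancestors r par l"
  proof (rule ccontr)
    assume "w \<notin> ancestors r par l"
    with le show False
      using not_ancestor_path_code_less[OF depth_le inj_f f_range assms]
      by (auto simp: sw_point_def sw_quadrant_def)
  qed
next
  assume "w \<in> ancestors r par l"
  then show "sw_point w \<in> sw_quadrant (fst (sw_point l)) (snd (sw_point l))"
    using path_code_ancestor_le[OF depth_le assms(1)] by (simp add: sw_point_def sw_quadrant_def)
qed

lemma sw_point_quadrant:
  assumes "l \<in> V"
  shows "sw_point ` V \<inter> sw_quadrant (fst (sw_point l)) (snd (sw_point l)) =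
         sw_point ` ancestors r par l"
proof -
  have "ancestors r par l \<subseteq> V"
    using ancestor_iff_suffix[OF assms] by auto
  then show ?thesis
    using sw_point_in_quadrant_iff[OF assms] by auto
qed

lemma sw_point_ancestor_less:
  assumes "l \<in> V" and "w \<in> ancestors r par l" and "w \<noteq> l"
  shows "fst (sw_point w) < fst (sw_point l) \<and> snd (sw_point w) < snd (sw_point l)"
proof -
  have "\<forall>v\<in>V. 0 < f v" and "\<forall>v\<in>V. 0 < B - f v" and "0 < B"
    using f_range root_in_V by auto
  then show ?thesis
    using path_code_ancestor_less[OF depth_le _ _ assms] by (simp add: sw_point_def)
qed

lemma inj_on_sw_point: "inj_on sw_point V"
proof (rule inj_onI)
  fix v w assume "v \<in> V" and "w \<in> V" and "sw_point w = sw_point v"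
  then have "w \<in> ancestors r par v"
    using sw_point_in_quadrant_iff[OF \<open>v \<in> V\<close> \<open>w \<in> V\<close>] by (simp add: sw_quadrant_def)
  then show "w = v"
    using sw_point_ancestor_less \<open>v \<in> V\<close> \<open>sw_point w = sw_point v\<close> by fastforce
qed

lemma sw_point_children_antidiagonal:
  "\<exists>c. \<forall>w \<in> children V r par v. fst (sw_point w) + snd (sw_point w) = c"
proof
  let ?c = "real (aligned_horner_sum (\<lambda>_. B) B K (replicate (Suc (depth v)) v))"
  show "\<forall>w \<in> children V r par v. fst (sw_point w) + snd (sw_point w) = ?c"
  proof
    fix w assume w: "w \<in> children V r par v"
    then have "w \<in> V"
      by (simp add: children_def)
    have "\<forall>u\<in>V. f u \<le> B"
      using f_range by auto
    then have "fst (sw_point w) + snd (sw_point w) =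
               real (aligned_horner_sum (\<lambda>_. B) B K (path_to_root w))"
      using path_code_add_complement[OF depth_le _ \<open>w \<in> V\<close>]
      by (simp add: sw_point_def flip: of_nat_add)
    also have "\<dots> = ?c"
      using depth_child[OF w]
        aligned_horner_sum_const[of "path_to_root w" "replicate (Suc (depth v)) v"] by simp
    finally show "fst (sw_point w) + snd (sw_point w) = ?c" .
  qed
qed

end

end

theorem lemma4:
  fixes V :: "'a set" and r :: 'a and par :: "'a \<Rightarrow> 'a"
  assumes "rooted_tree V r par"
  shows "\<exists>\<pi> :: 'a \<Rightarrow> real \<times> real.
           inj_on \<pi> V \<and>
           (\<forall>l. is_leaf V r par l \<longrightarrow>
              (\<exists>a b. \<pi> ` V \<inter> sw_quadrant a b = \<pi> ` ancestors r par l)) \<and>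
           (\<forall>v \<in> V - {r}. fst (\<pi> r) < fst (\<pi> v) \<and> snd (\<pi> r) < snd (\<pi> v)) \<and>
           (\<forall>v \<in> V. children V r par v \<noteq> {} \<longrightarrow>
              (\<exists>c. \<forall>w \<in> children V r par v. fst (\<pi> w) + snd (\<pi> w) = c))"
proof -
  interpret finite_rooted_tree V r par
    by (rule finite_rooted_tree.intro) (fact assms)
  obtain g and n :: nat where g: "g ` V = {i. i < n}" "inj_on g V"
    using finite_imp_inj_to_nat_seg[OF finite_V] by blast
  define f where "f v = Suc (g v)" for v
  define K where "K = Max (depth ` V)"
  have f_inj: "inj_on f V" and f_range: "\<forall>v\<in>V. 0 < f v \<and> f v < Suc n"
    using g by (auto simp: f_def inj_on_def)
  have depth_le: "\<And>v. v \<in> V \<Longrightarrow> depth v \<le> K"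
    using finite_V by (simp add: K_def)
  note embedding = f_inj f_range depth_le
  show ?thesis
    using inj_on_sw_point[OF embedding] sw_point_quadrant[OF embedding]
      sw_point_ancestor_less[OF embedding _ root_in_ancestors]
      sw_point_children_antidiagonal[OF embedding]
    unfolding is_leaf_def by (intro exI[of _ "sw_point f (Suc n) K"] conjI) blast+
qed

end
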